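(* The variety of Boolean algebras (equivalently, classical propositional logic, with formulas identified up to logical equivalence) has unitary e-generalization type.
   Context: For a variety $\mathsf V$: a symbolic e-generalization problem is a finite multiset $\{t_1,\dots,t_m\}$ of terms (elements of a free algebra $\mathbf F_{\mathsf V}(X)$, $X$ finite, i.e. terms up to the equational theory of $\mathsf V$); a solution is a term $s\in\mathbf F_{\mathsf V}(Y)$ ($Y$ the variables of $s$) such that there are substitutions (homomorphisms between free algebras) $\sigma_k$ with $\sigma_k(s)=t_k$ for all $k$; $s\preceq u$ iff $\sigma(u)=s$ for some substitution $\sigma$. A problem has unitary type if its poset of solutions modulo $\preceq$-equivalence has a minimal complete set (pairwise incomparable elements such that every solution lies above one of them) of cardinality 1, i.e. a least general solution exists. A variety has unitary e-generalization type if every such problem has unitary type. For a logic, e-generalization is taken with respect to logical equivalence of formulas, which for classical logic is the equational theory of Boolean algebras. *)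

theory Defs
  imports Main "HOL-Library.Multiset"
begin

datatype form = Var nat | Bot | Top | Neg form | And form form | Or form form

primrec eval :: "(nat \<Rightarrow> bool) \<Rightarrow> form \<Rightarrow> bool" where
  "eval v (Var x) = v x"
| "eval v Bot = False"
| "eval v Top = True"
| "eval v (Neg f) = (\<not> eval v f)"
| "eval v (And f g) = (eval v f \<and> eval v g)"
| "eval v (Or f g) = (eval v f \<or> eval v g)"

text \<open>Logical equivalence = equality in the free Boolean algebra.\<close>
definition equiv :: "form \<Rightarrow> form \<Rightarrow> bool" where
  "equiv f g \<longleftrightarrow> (\<forall>v. eval v f = eval v g)"

primrec subst :: "(nat \<Rightarrow> form) \<Rightarrow> form \<Rightarrow> form" where
  "subst \<sigma> (Var x) = \<sigma> x"
| "subst \<sigma> Bot = Bot"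
| "subst \<sigma> Top = Top"
| "subst \<sigma> (Neg f) = Neg (subst \<sigma> f)"
| "subst \<sigma> (And f g) = And (subst \<sigma> f) (subst \<sigma> g)"
| "subst \<sigma> (Or f g) = Or (subst \<sigma> f) (subst \<sigma> g)"

definition instance_of :: "form \<Rightarrow> form \<Rightarrow> bool" where
  "instance_of s u \<longleftrightarrow> (\<exists>\<sigma>. equiv (subst \<sigma> u) s)"

definition is_solution :: "form multiset \<Rightarrow> form \<Rightarrow> bool" where
  "is_solution M s \<longleftrightarrow> (\<forall>t \<in># M. \<exists>\<sigma>. equiv (subst \<sigma> s) t)"

definition minimal_complete_set :: "form multiset \<Rightarrow> form set \<Rightarrow> bool" where
  "minimal_complete_set M S \<longleftrightarrow>
     (\<forall>s\<in>S. is_solution M s)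
   \<and> (\<forall>a\<in>S. \<forall>b\<in>S. a \<noteq> b \<longrightarrow> \<not> instance_of a b)
   \<and> (\<forall>u. is_solution M u \<longrightarrow> (\<exists>s\<in>S. instance_of s u))"

definition unitary_type :: "form multiset \<Rightarrow> bool" where
  "unitary_type M \<longleftrightarrow> (\<exists>S. minimal_complete_set M S \<and> card S = 1)"

end

theory Submission
  imports Defs
begin

text \<open>Up to equivalence, s is an instance of u exactly when every truth value taken by s is
  also taken by u: if u is true under the valuation a and false under b, the substitution
  x \<mapsto> (s \<and> a x) \<or> (\<not> s \<and> b x) turns u into a formula equivalent to s. Hence the
  solutions of a problem M are the formulas taking all truth values taken by members of M, and
  a formula taking exactly those values (Top, Bot or a variable) is a least general solution.\<close>

lemma eval_subst: "eval v (subst \<sigma> f) = eval (\<lambda>x. eval v (\<sigma> x)) f"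
  by (induction f) auto

definition truth_values :: "form \<Rightarrow> bool set" where
  "truth_values f = range (\<lambda>v. eval v f)"

lemma truth_values_nonempty: "truth_values f \<noteq> {}"
  by (simp add: truth_values_def)

lemma truth_values_Top [simp]: "truth_values Top = {True}"
  and truth_values_Bot [simp]: "truth_values Bot = {False}"
  and truth_values_Var [simp]: "truth_values (Var x) = UNIV"
  by (auto simp: truth_values_def intro: range_eqI[of _ "\<lambda>_. True"] range_eqI[of _ "\<lambda>_. False"])

lemma truth_values_equiv: "equiv f g \<Longrightarrow> truth_values f = truth_values g"
  by (simp add: truth_values_def equiv_def)

lemma truth_values_subst_subset: "truth_values (subst \<sigma> u) \<subseteq> truth_values u"
  by (auto simp: truth_values_def eval_subst)

lemma ex_truth_values_eq:
  assumes "B \<noteq> {}"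
  shows "\<exists>s. truth_values s = B"
proof -
  have "B = {True} \<or> B = {False} \<or> B = UNIV"
    using assms by (metis (full_types) UNIV_eq_I insertCI subsetI subset_singletonD)
  then show ?thesis
    by (metis truth_values_Bot truth_values_Top truth_values_Var)
qed

lemma instance_of_iff_truth_values_subset:
  "instance_of s u \<longleftrightarrow> truth_values s \<subseteq> truth_values u"
proof
  assume "instance_of s u"
  then obtain \<sigma> where "equiv (subst \<sigma> u) s"
    by (auto simp: instance_of_def)
  then have "truth_values s = truth_values (subst \<sigma> u)"
    by (simp add: truth_values_equiv)
  also have "\<dots> \<subseteq> truth_values u"
    by (rule truth_values_subst_subset)
  finally show "truth_values s \<subseteq> truth_values u" .
next
  assume realised: "truth_values s \<subseteq> truth_values u"
  define w where "w c = (SOME w. eval w u = c)" for c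
  have w: "eval (w (eval v s)) u = eval v s" for v
  proof -
    have "\<exists>w. eval w u = eval v s"
      using realised by (auto simp: truth_values_def)
    then show ?thesis
      unfolding w_def by (rule someI_ex)
  qed
  define \<sigma> where "\<sigma> x = Or (And s (if w True x then Top else Bot))
                             (And (Neg s) (if w False x then Top else Bot))" for x
  have "eval v (subst \<sigma> u) = eval v s" for v
  proof -
    have "(\<lambda>x. eval v (\<sigma> x)) = w (eval v s)"
      by (cases "eval v s") (auto simp: \<sigma>_def)
    then show ?thesis
      by (simp add: eval_subst w)
  qed
  then show "instance_of s u"
    by (auto simp: instance_of_def equiv_def)
qed

lemma is_solution_iff_truth_values_subset:
  "is_solution M u \<longleftrightarrow> (\<Union>t \<in> set_mset M. truth_values t) \<subseteq> truth_values u"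
  by (auto simp: is_solution_def simp flip: instance_of_def
      simp add: instance_of_iff_truth_values_subset)

theorem theorem5p1:
  shows "\<forall>M :: form multiset. M \<noteq> {#} \<longrightarrow> unitary_type M"
proof (intro allI impI)
  fix M :: "form multiset"
  assume "M \<noteq> {#}"
  then have "(\<Union>t \<in> set_mset M. truth_values t) \<noteq> {}"
    using truth_values_nonempty by auto
  then obtain s where s: "truth_values s = (\<Union>t \<in> set_mset M. truth_values t)"
    using ex_truth_values_eq by blast
  have "minimal_complete_set M {s}"
    using s by (simp add: minimal_complete_set_def is_solution_iff_truth_values_subset
        instance_of_iff_truth_values_subset)
  then show "unitary_type M"
    unfolding unitary_type_def by (intro exI[of _ "{s}"]) simp
qed

end
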